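(* For fixed $0<q<1$, $p=1-q$, integers $r\ge1$ and $n\ge r$, \[ E^{(r)}_n=(-1)^r\Big(\frac pq\Big)^{r-1}\sum_{k=r}^n\binom nk(-1)^k\frac{\phi_r(k)}{(1-q^k)^2}, \] where, with $Q=1/q$, \[ \phi_r(k)=\sum_{0<l_1<\dots<l_{r-1}<k}\frac{1}{Q^{l_1}-1}\cdots\frac{1}{Q^{l_{r-1}}-1}\,\big(q^{l_{r-1}}-q^k\big), \] with the convention that for $r=1$ the sum consists of the single empty-index term with $l_0=0$, i.e. $\phi_1(k)=1-q^k$. In particular \[ E^{(1)}_n=\sum_{k=1}^n\binom nk(-1)^{k-1}\frac{1}{1-q^k}. \]
   Context: Words $a_1\dots a_n$ have independent letters with $\mathbb P\{a_i=k\}=pq^{k-1}$, $k\ge1$. An index $i$ is a left-to-right maximum if $a_i>a_j$ for all $j<i$. Left-to-right maxima are counted from the right (the last one is the 1st). $E^{(r)}_n=\mathbb E[V\cdot\mathbf 1\{\text{at least } r \text{ left-to-right maxima}\}]$ where $V$ is the value of the $r$th left-to-right maximum from the right. *)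

theory Defs
  imports "HOL-Probability.Probability"
begin

text \<open>A single letter: value k \<ge> 1 with probability p q^(k-1), where p = 1 - q.
  (geometric_pmf p gives j \<ge> 0 with probability (1-p)^j p, so the letter is Suc of it.)\<close>
definition letter_pmf :: "real \<Rightarrow> nat pmf" where
  "letter_pmf q = map_pmf Suc (geometric_pmf (1 - q))"

text \<open>Random word a_0 ... a_(n-1) (0-based positions) with independent letters;
  positions outside {..<n} carry the dummy value 0.\<close>
definition word_pmf :: "real \<Rightarrow> nat \<Rightarrow> (nat \<Rightarrow> nat) pmf" where
  "word_pmf q n = Pi_pmf {..<n} 0 (\<lambda>_. letter_pmf q)"

definition ltr_max_pos :: "nat \<Rightarrow> (nat \<Rightarrow> nat) \<Rightarrow> nat set" where
  "ltr_max_pos n a = {i. i < n \<and> (\<forall>j<i. a j < a i)}"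

text \<open>Value of the r-th left-to-right maximum counted from the right (r \<ge> 1):
  the last one is the 1st.\<close>
definition rth_ltr_max_value :: "nat \<Rightarrow> nat \<Rightarrow> (nat \<Rightarrow> nat) \<Rightarrow> nat" where
  "rth_ltr_max_value r n a = a (rev (sorted_list_of_set (ltr_max_pos n a)) ! (r - 1))"

definition E_rn :: "real \<Rightarrow> nat \<Rightarrow> nat \<Rightarrow> real" where
  "E_rn q r n = measure_pmf.expectation (word_pmf q n)
     (\<lambda>a. if card (ltr_max_pos n a) \<ge> r then real (rth_ltr_max_value r n a) else 0)"

text \<open>phi_r(k): sum over 0 < l_1 < ... < l_(r-1) < k, i.e. over subsets L of {1..<k}
  of size r-1; l_(r-1) = max L, with the convention l_0 = 0 when L is empty.
  Q = 1/q.\<close>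
definition phi :: "real \<Rightarrow> nat \<Rightarrow> nat \<Rightarrow> real" where
  "phi q r k = (\<Sum>L\<in>{L. L \<subseteq> {1..<k} \<and> card L = r - 1}.
      (\<Prod>l\<in>L. 1 / ((1 / q) ^ l - 1)) * (q ^ (if L = {} then 0 else Max L) - q ^ k))"

end

theory Submission
  imports Defs
begin

(*
  Let V be the r-th left-to-right maximum from the right, and V = 0 if there are fewer than r
  of them. Then E[V] = sum_t P(V > t), and V > t iff at least r left-to-right maxima exceed t.
  Conditioning on the first letter y shows how the probability P_r(d, t) of this event for d
  letters depends on d - 1 letters: if y <= t the first letter is irrelevant, otherwise it is
  counted and the threshold rises to y. Since P(y > t) = q^t, this recursion is solved by
  P_r(d, t) = sum_k C(d, k) q^(t k) c_(r,k) with coefficients c_(r,k) obeying a two-term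
  recursion in k, and summing the geometric series over t gives
  E = sum_k C(n, k) c_(r,k) / (1 - q^k). Finally
  c_(r,k) = (-1)^(r+k) ((1 - q)/q)^(r-1) phi_r(k) / (1 - q^k): in terms of the elementary
  symmetric sums of the weights 1/(Q^l - 1), l < k, the recursion for c becomes a recursion
  for phi_r(k) in k, obtained by splitting the index sets according to whether they contain k.
*)

lemma sum_card_subsets_insert:
  assumes "finite A" "a \<notin> A"
  shows "(\<Sum>L | L \<subseteq> insert a A \<and> card L = Suc j. F L)
       = (\<Sum>L | L \<subseteq> A \<and> card L = Suc j. F L)
         + (\<Sum>L | L \<subseteq> A \<and> card L = j. F (insert a L))"
proof -
  have split: "{L. L \<subseteq> insert a A \<and> card L = Suc j}
      = {L. L \<subseteq> A \<and> card L = Suc j} \<union> insert a ` {L. L \<subseteq> A \<and> card L = j}"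
  proof (intro equalityI subsetI)
    fix L assume L: "L \<in> {L. L \<subseteq> insert a A \<and> card L = Suc j}"
    show "L \<in> {L. L \<subseteq> A \<and> card L = Suc j} \<union> insert a ` {L. L \<subseteq> A \<and> card L = j}"
    proof (cases "a \<in> L")
      case True
      then have "L = insert a (L - {a})" "L - {a} \<subseteq> A" "card (L - {a}) = j"
        using L finite_subset[OF _ finite_insert[THEN iffD2, OF assms(1)]] by auto
      then show ?thesis by blast
    qed (use L in auto)
  next
    fix L assume "L \<in> {L. L \<subseteq> A \<and> card L = Suc j} \<union> insert a ` {L. L \<subseteq> A \<and> card L = j}"
    then show "L \<in> {L. L \<subseteq> insert a A \<and> card L = Suc j}"
      using assms by (auto simp: finite_subset card_insert_if)
  qed
  have "inj_on (insert a) {L. L \<subseteq> A \<and> card L = j}"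
    using assms by (intro inj_onI) (metis insert_ident mem_Collect_eq subsetD)
  moreover have "finite {L. L \<subseteq> A \<and> card L = k}" for k
    using assms(1) by simp
  ultimately show ?thesis
    unfolding split using assms(2)
    by (subst sum.union_disjoint) (auto simp: sum.reindex)
qed

lemma sum_choose_Suc_split:
  "(\<Sum>k\<le>Suc d. of_nat (Suc d choose k) * F k)
     = (\<Sum>k\<le>d. of_nat (d choose k) * F k) + (\<Sum>k\<le>d. of_nat (d choose k) * F (Suc k))"
proof -
  have "(\<Sum>k\<le>Suc d. of_nat (Suc d choose k) * F k)
      = F 0 + (\<Sum>k\<le>d. of_nat (d choose Suc k) * F (Suc k))
        + (\<Sum>k\<le>d. of_nat (d choose k) * F (Suc k))"
    by (subst sum.atMost_Suc_shift) (simp add: sum.distrib algebra_simps)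
  also have "F 0 + (\<Sum>k\<le>d. of_nat (d choose Suc k) * F (Suc k))
      = (\<Sum>k\<le>Suc d. of_nat (d choose k) * F k)"
    by (subst sum.atMost_Suc_shift) simp
  also have "\<dots> = (\<Sum>k\<le>d. of_nat (d choose k) * F k)"
    by (simp add: binomial_eq_0)
  finally show ?thesis .
qed

section \<open>The sums phi\<close>

definition qweight :: "real \<Rightarrow> nat \<Rightarrow> real" where
  "qweight q l = 1 / ((1 / q) ^ l - 1)"

definition index_sets :: "nat \<Rightarrow> nat \<Rightarrow> nat set set" where
  "index_sets j k = {L. L \<subseteq> {1..<k} \<and> card L = j}"

definition elem_sym :: "real \<Rightarrow> nat \<Rightarrow> nat \<Rightarrow> real" where
  "elem_sym q j k = (\<Sum>L\<in>index_sets j k. \<Prod>l\<in>L. qweight q l)"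

definition elem_sym_top :: "real \<Rightarrow> nat \<Rightarrow> nat \<Rightarrow> real" where
  "elem_sym_top q j k =
     (\<Sum>L\<in>index_sets j k. (\<Prod>l\<in>L. qweight q l) * q ^ (if L = {} then 0 else Max L))"

lemma qweight_mult_one_minus_power:
  assumes "0 < q" "q < 1" "1 \<le> k"
  shows "qweight q k * (1 - q ^ k) = q ^ k"
proof -
  have "q ^ k < 1" using assms by (simp add: power_less_one_iff)
  then show ?thesis using assms by (simp add: qweight_def field_simps)
qed

lemma index_sets_0 [simp]: "index_sets 0 k = {{}}"
  by (auto simp: index_sets_def finite_subset)

lemma index_sets_Suc_1 [simp]: "index_sets (Suc j) (Suc 0) = {}"
  by (auto simp: index_sets_def)

lemma sum_index_sets_Suc:
  assumes "1 \<le> k"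
  shows "(\<Sum>L\<in>index_sets (Suc j) (Suc k). F L)
       = (\<Sum>L\<in>index_sets (Suc j) k. F L) + (\<Sum>L\<in>index_sets j k. F (insert k L))"
proof -
  have "{1..<Suc k} = insert k {1..<k}" using assms by auto
  then show ?thesis
    unfolding index_sets_def by (simp add: sum_card_subsets_insert)
qed

lemma elem_sym_0 [simp]: "elem_sym q 0 k = 1"
  and elem_sym_top_0 [simp]: "elem_sym_top q 0 k = 1"
  by (simp_all add: elem_sym_def elem_sym_top_def)

lemma elem_sym_Suc_1 [simp]: "elem_sym q (Suc j) (Suc 0) = 0"
  and elem_sym_top_Suc_1 [simp]: "elem_sym_top q (Suc j) (Suc 0) = 0"
  unfolding elem_sym_def elem_sym_top_def index_sets_Suc_1 by simp_all

lemma elem_sym_Suc: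
  assumes "1 \<le> k"
  shows "elem_sym q (Suc j) (Suc k) = elem_sym q (Suc j) k + qweight q k * elem_sym q j k"
proof -
  have "k \<notin> L" "finite L" if "L \<in> index_sets j k" for L
    using that by (auto simp: index_sets_def finite_subset)
  then show ?thesis
    unfolding elem_sym_def sum_index_sets_Suc[OF assms] sum_distrib_left
    by (intro arg_cong[where f="(+) _"] sum.cong) simp_all
qed

lemma elem_sym_top_Suc:
  assumes "1 \<le> k"
  shows "elem_sym_top q (Suc j) (Suc k)
       = elem_sym_top q (Suc j) k + qweight q k * q ^ k * elem_sym q j k"
proof -
  have "k \<notin> L" "finite L" "Max (insert k L) = k" if "L \<in> index_sets j k" for L
    using that by (auto simp: index_sets_def finite_subset intro!: Max_eqI)
  then show ?thesis
    unfolding elem_sym_top_def elem_sym_def sum_index_sets_Suc[OF assms] sum_distrib_left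
    by (intro arg_cong[where f="(+) _"] sum.cong) (simp_all add: mult_ac)
qed

lemma phi_eq_elem_sym: "phi q (Suc j) k = elem_sym_top q j k - q ^ k * elem_sym q j k"
  unfolding phi_def elem_sym_top_def elem_sym_def index_sets_def qweight_def
  by (simp add: sum_subtractf sum_distrib_left right_diff_distrib mult_ac)

lemma phi_1: "phi q (Suc 0) k = 1 - q ^ k"
  using phi_eq_elem_sym[of q 0 k] by simp

lemma phi_Suc_Suc_1 [simp]: "phi q (Suc (Suc j)) (Suc 0) = 0"
  by (simp add: phi_eq_elem_sym)

lemma phi_Suc_increment:
  assumes "1 \<le> k"
  shows "phi q (Suc j) (Suc k) = phi q (Suc j) k + (1 - q) * q ^ k * elem_sym q j (Suc k)"
  by (cases j) (simp_all add: phi_eq_elem_sym elem_sym_Suc[OF assms] elem_sym_top_Suc[OF assms] algebra_simps)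

(* Splitting off the largest index l and using qweight_mult_one_minus_power, both sides equal
   (1 - q) * (SUM L : index_sets j k. (PROD i : L. qweight q i) * (SUM l | Max L < l < k. q ^ l)). *)
lemma elem_sym_minus_top:
  assumes "0 < q" "q < 1" "1 \<le> k"
  shows "(1 - q) * (elem_sym q (Suc j) k - elem_sym_top q (Suc j) k)
       = q * elem_sym_top q j k - q ^ k * elem_sym q j k"
  using assms(3)
proof (induction k arbitrary: j rule: dec_induct)
  case base
  then show ?case by (cases j) simp_all
next
  case (step k)
  have w: "qweight q k * (1 - q ^ k) = q ^ k"
    using qweight_mult_one_minus_power[OF assms(1,2) step(1)] .
  have "(1 - q) * (elem_sym q (Suc j) (Suc k) - elem_sym_top q (Suc j) (Suc k))
      = (1 - q) * (elem_sym q (Suc j) k - elem_sym_top q (Suc j) k)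
        + (1 - q) * (qweight q k * (1 - q ^ k)) * elem_sym q j k"
    by (simp add: elem_sym_Suc[OF step(1)] elem_sym_top_Suc[OF step(1)] algebra_simps)
  also have "\<dots> = (q * elem_sym_top q j k - q ^ k * elem_sym q j k) + (1 - q) * q ^ k * elem_sym q j k"
    by (simp only: step.IH w)
  also have "\<dots> = q * elem_sym_top q j k - q ^ Suc k * elem_sym q j k"
    by (simp add: algebra_simps)
  also have "\<dots> = q * elem_sym_top q j (Suc k) - q ^ Suc k * elem_sym q j (Suc k)"
    by (cases j) (simp_all add: elem_sym_Suc[OF step(1)] elem_sym_top_Suc[OF step(1)] algebra_simps)
  finally show ?case .
qed

lemma phi_recurrence:
  assumes "0 < q" "q < 1" "1 \<le> k"
  shows "phi q (Suc (Suc j)) (Suc k) * (1 - q ^ k) - phi q (Suc (Suc j)) k * (1 - q ^ Suc k)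
       = q ^ Suc k * phi q (Suc j) k"
proof -
  have alg: "((A1 - x * S1) + (1 - q) * x * (S1 + w * S0)) * (1 - x) - (A1 - x * S1) * (1 - q * x)
      = q * x * (A0 - x * S0)"
    if "w * (1 - x) = x" "(1 - q) * (S1 - A1) = q * A0 - x * S0" for A0 A1 S0 S1 w x :: real
  proof -
    have "((A1 - x * S1) + (1 - q) * x * (S1 + w * S0)) * (1 - x) - (A1 - x * S1) * (1 - q * x)
        - q * x * (A0 - x * S0)
        = (1 - q) * x * S0 * (w * (1 - x) - x) + x * ((1 - q) * (S1 - A1) - (q * A0 - x * S0))"
      by (simp add: algebra_simps)
    then show ?thesis using that by simp
  qed
  show ?thesis
    using alg[OF qweight_mult_one_minus_power[OF assms] elem_sym_minus_top[OF assms]]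
    unfolding phi_Suc_increment[OF assms(3)]
    unfolding phi_eq_elem_sym elem_sym_Suc[OF assms(3)] power_Suc .
qed

(* The coefficients c_(r,k) of tail_prob as a polynomial in q ^ t; the recursion in k is the one
   forced by conditioning on the first letter (sum_binomial_tail_coeff_Suc). *)
fun tail_coeff :: "real \<Rightarrow> nat \<Rightarrow> nat \<Rightarrow> real" where
  "tail_coeff q 0 k = (if k = 0 then 1 else 0)"
| "tail_coeff q (Suc r) 0 = 0"
| "tail_coeff q (Suc r) (Suc k) =
     - tail_coeff q (Suc r) k + (1 - q) * q ^ k * tail_coeff q r k / (1 - q ^ Suc k)"

lemma tail_coeff_eq_0: "k < r \<Longrightarrow> tail_coeff q r k = 0"
proof (induction k arbitrary: r)
  case 0
  then show ?case by (cases r) auto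
next
  case (Suc k)
  then obtain r' where "r = Suc r'" "k < r'" by (cases r) auto
  then show ?case using Suc.IH by simp
qed

definition tail_coeff_closed :: "real \<Rightarrow> nat \<Rightarrow> nat \<Rightarrow> real" where
  "tail_coeff_closed q r k = (-1) ^ (r + k) * ((1 - q) / q) ^ (r - 1) * phi q r k / (1 - q ^ k)"

lemma tail_coeff_closed_Suc_Suc:
  assumes "0 < q" "q < 1" "1 \<le> k"
  shows "tail_coeff_closed q (Suc (Suc m)) (Suc k)
       = - tail_coeff_closed q (Suc (Suc m)) k
         + (1 - q) * q ^ k * tail_coeff_closed q (Suc m) k / (1 - q ^ Suc k)"
proof -
  define c where "c = (1 - q) / q"
  define s where "s = (-1 :: real) ^ (m + k)"
  define a b where "a = 1 - q ^ k" and "b = 1 - q ^ Suc k"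
  define X Y Z where "X = phi q (Suc (Suc m)) (Suc k)" and "Y = phi q (Suc (Suc m)) k"
    and "Z = phi q (Suc m) k"
  have "q ^ k < 1" using assms by (simp add: power_less_one_iff)
  then have "a \<noteq> 0" "b \<noteq> 0"
    using power_Suc_less_one[OF assms(1,2), of k] by (auto simp: a_def b_def)
  have key: "c * (X * a - Y * b) = (1 - q) * q ^ k * Z"
    using phi_recurrence[OF assms, of m] assms(1) by (simp add: a_def b_def c_def X_def Y_def Z_def)
  have closed: "tail_coeff_closed q (Suc (Suc m)) (Suc k) = - (s * c * c ^ m * X / b)"
    "tail_coeff_closed q (Suc (Suc m)) k = s * c * c ^ m * Y / a"
    "tail_coeff_closed q (Suc m) k = - (s * c ^ m * Z / a)"
    by (simp_all add: tail_coeff_closed_def s_def c_def a_def b_def X_def Y_def Z_def)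
  have "- tail_coeff_closed q (Suc (Suc m)) k + (1 - q) * q ^ k * tail_coeff_closed q (Suc m) k / b
        - tail_coeff_closed q (Suc (Suc m)) (Suc k)
      = s * c ^ m * (c * (X * a - Y * b) - (1 - q) * q ^ k * Z) / (a * b)"
    unfolding closed using \<open>a \<noteq> 0\<close> \<open>b \<noteq> 0\<close> by (simp add: field_simps)
  then have "tail_coeff_closed q (Suc (Suc m)) (Suc k)
      = - tail_coeff_closed q (Suc (Suc m)) k + (1 - q) * q ^ k * tail_coeff_closed q (Suc m) k / b"
    unfolding key by simp
  then show ?thesis by (simp add: b_def)
qed

lemma tail_coeff_eq_closed:
  assumes "0 < q" "q < 1" "1 \<le> r" "1 \<le> k"
  shows "tail_coeff q r k = tail_coeff_closed q r k"
  using assms(4,3)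
proof (induction k arbitrary: r rule: dec_induct)
  case base
  then obtain r' where "r = Suc r'" by (cases r) auto
  then show ?case using assms(1,2) by (cases r') (simp_all add: tail_coeff_closed_def phi_1)
next
  case (step k)
  have "q ^ k < 1" "q ^ Suc k < 1"
    using assms(1,2) step(1) by (simp add: power_less_one_iff) (rule power_Suc_less_one[OF assms(1,2)])
  consider "r = 1" | m where "r = Suc (Suc m)"
    using step(4) by (metis One_nat_def Suc_le_D not0_implies_Suc)
  then show ?case
  proof cases
    case 1
    then show ?thesis
      using step.IH[of 1] tail_coeff_eq_0[of 0 k q] step(1) \<open>q ^ k < 1\<close> \<open>q ^ Suc k < 1\<close>
      by (simp add: tail_coeff_closed_def phi_1)
  next
    case (2 m)
    then show ?thesis
      using step.IH[of "Suc m"] step.IH[of "Suc (Suc m)"]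
      by (simp add: tail_coeff_closed_Suc_Suc[OF assms(1,2) step(1)])
  qed
qed

section \<open>Left-to-right maxima\<close>

lemma card_above_nth_sorted_list_of_set:
  fixes S :: "'a::linorder set"
  assumes "finite S" "p < card S"
  shows "card {i \<in> S. sorted_list_of_set S ! p \<le> i} = card S - p"
    and "card {i \<in> S. sorted_list_of_set S ! p < i} = card S - Suc p"
proof -
  define xs where "xs = sorted_list_of_set S"
  have len: "length xs = card S" and set_xs: "set xs = S" and "distinct xs"
    and sorted: "sorted_wrt (<) xs"
    using assms(1) by (simp_all add: xs_def)
  have le_iff: "xs ! p \<le> xs ! k \<longleftrightarrow> p \<le> k" and less_iff: "xs ! p < xs ! k \<longleftrightarrow> p < k"
    if "k < card S" for k
    using that assms(2) len sorted_wrt_nth_less[OF sorted, of p k] sorted_wrt_nth_less[OF sorted, of k p]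
    by (cases p k rule: linorder_cases; simp)+
  have card_segment: "card (nth xs ` {a..<card S}) = card S - a" for a
    using \<open>distinct xs\<close> len by (subst card_image) (auto intro: inj_on_nth)
  have "{i \<in> S. xs ! p \<le> i} = nth xs ` {p..<card S}" "{i \<in> S. xs ! p < i} = nth xs ` {Suc p..<card S}"
    using le_iff less_iff by (auto simp: in_set_conv_nth len Suc_le_eq simp flip: set_xs)
  then show "card {i \<in> S. sorted_list_of_set S ! p \<le> i} = card S - p"
    and "card {i \<in> S. sorted_list_of_set S ! p < i} = card S - Suc p"
    by (simp_all only: xs_def[symmetric] card_segment)
qed

lemma card_above_ge_iff_rth_largest:
  fixes S :: "'a::linorder set" and f :: "'a \<Rightarrow> 'b::linorder"
  assumes "finite S" "1 \<le> r" "strict_mono_on S f"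
  shows "r \<le> card {i \<in> S. t < f i}
     \<longleftrightarrow> r \<le> card S \<and> t < f (rev (sorted_list_of_set S) ! (r - 1))"
proof (cases "r \<le> card S")
  case False
  then show ?thesis using card_mono[OF assms(1), of "{i \<in> S. t < f i}"] by auto
next
  case True
  define x where "x = sorted_list_of_set S ! (card S - r)"
  have "x \<in> S"
    using True assms(1,2) nth_mem[of "card S - r" "sorted_list_of_set S"] by (simp add: x_def)
  have rth: "rev (sorted_list_of_set S) ! (r - 1) = x"
    using True assms(2) by (simp add: x_def rev_nth)
  have "r \<le> card {i \<in> S. t < f i} \<longleftrightarrow> t < f x"
  proof
    assume r_le: "r \<le> card {i \<in> S. t < f i}"
    show "t < f x"
    proof (rule ccontr)
      assume "\<not> t < f x"
      then have "{i \<in> S. t < f i} \<subseteq> {i \<in> S. x < i}"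
        using strict_mono_on_less[OF assms(3) \<open>x \<in> S\<close>] by (auto simp: not_less intro: le_less_trans)
      from card_mono[OF _ this] have "card {i \<in> S. t < f i} \<le> r - 1"
        using card_above_nth_sorted_list_of_set(2)[OF assms(1), of "card S - r"] True assms(1,2)
        by (simp add: x_def)
      then show False using r_le assms(2) by linarith
    qed
  next
    assume "t < f x"
    then have "{i \<in> S. x \<le> i} \<subseteq> {i \<in> S. t < f i}"
      using strict_mono_on_less_eq[OF assms(3) \<open>x \<in> S\<close>] by (auto intro: order.strict_trans2)
    from card_mono[OF _ this] show "r \<le> card {i \<in> S. t < f i}"
      using card_above_nth_sorted_list_of_set(1)[OF assms(1), of "card S - r"] True assms(1,2)
      by (simp add: x_def)
  qed
  then show ?thesis using True rth by simp
qed

definition ltr_max_from :: "nat \<Rightarrow> nat \<Rightarrow> (nat \<Rightarrow> nat) \<Rightarrow> nat set" where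
  "ltr_max_from m n a = {i. m \<le> i \<and> i < n \<and> (\<forall>j. m \<le> j \<and> j < i \<longrightarrow> a j < a i)}"

definition count_ltr_max_above :: "nat \<Rightarrow> nat \<Rightarrow> (nat \<Rightarrow> nat) \<Rightarrow> nat \<Rightarrow> nat" where
  "count_ltr_max_above m n a t = card {i \<in> ltr_max_from m n a. t < a i}"

lemma ltr_max_pos_eq_from_0: "ltr_max_pos n a = ltr_max_from 0 n a"
  by (simp add: ltr_max_pos_def ltr_max_from_def)

lemma finite_ltr_max_from [simp]: "finite (ltr_max_from m n a)"
  by (rule finite_subset[of _ "{..<n}"]) (auto simp: ltr_max_from_def)

lemma count_ltr_max_above_empty [simp]: "count_ltr_max_above m m a t = 0"
  by (simp add: count_ltr_max_above_def ltr_max_from_def)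

lemma ltr_max_from_upd_above:
  assumes "m < n"
  shows "{i \<in> ltr_max_from m n (a(m := y)). t < (a(m := y)) i}
       = (if y \<le> t then {i \<in> ltr_max_from (Suc m) n a. t < a i}
          else insert m {i \<in> ltr_max_from (Suc m) n a. y < a i})"
proof -
  have "i \<in> ltr_max_from m n (a(m := y)) \<longleftrightarrow> y < a i \<and> i \<in> ltr_max_from (Suc m) n a"
    if "m < i" for i
    using that by (auto simp: ltr_max_from_def Suc_le_eq)
  then show ?thesis
    using assms by (auto simp: ltr_max_from_def)
qed

lemma count_ltr_max_above_upd:
  assumes "m < n"
  shows "count_ltr_max_above m n (a(m := y)) t
       = (if y \<le> t then count_ltr_max_above (Suc m) n a t
          else Suc (count_ltr_max_above (Suc m) n a y))"
proof -
  have "m \<notin> ltr_max_from (Suc m) n a" by (simp add: ltr_max_from_def)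
  then show ?thesis
    unfolding count_ltr_max_above_def ltr_max_from_upd_above[OF assms] by simp
qed

lemma ltr_max_above_ge_iff:
  assumes "1 \<le> r"
  shows "r \<le> count_ltr_max_above 0 n a t
     \<longleftrightarrow> r \<le> card (ltr_max_pos n a) \<and> t < rth_ltr_max_value r n a"
  unfolding count_ltr_max_above_def rth_ltr_max_value_def ltr_max_pos_eq_from_0
  by (rule card_above_ge_iff_rth_largest[OF _ assms]) (auto simp: ltr_max_from_def strict_mono_on_def)

section \<open>Tail probabilities\<close>

lemma measure_bind_pmf:
  "measure_pmf.prob (bind_pmf M N) X = measure_pmf.expectation M (\<lambda>x. measure_pmf.prob (N x) X)"
proof -
  have "ennreal (measure_pmf.prob (bind_pmf M N) X) = (\<integral>\<^sup>+x. ennreal (measure_pmf.prob (N x) X) \<partial>M)"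
    by (simp flip: measure_pmf.emeasure_eq_measure)
  also have "\<dots> = ennreal (measure_pmf.expectation M (\<lambda>x. measure_pmf.prob (N x) X))"
    by (rule nn_integral_eq_integral) (auto intro!: measure_pmf.integrable_const_bound[where B=1])
  finally show ?thesis by (simp add: integral_nonneg_AE)
qed

lemma measure_Pi_pmf_insert:
  assumes "finite A" "x \<notin> A"
  shows "measure_pmf.prob (Pi_pmf (insert x A) dflt p) X
       = measure_pmf.expectation (p x) (\<lambda>y. measure_pmf.prob (Pi_pmf A dflt p) {f. f(x := y) \<in> X})"
  by (simp add: Pi_pmf_insert'[OF assms] measure_bind_pmf flip: map_pmf_def) (simp add: vimage_def)

lemma expectation_nat_sums_tail_probs:
  fixes X :: "'a \<Rightarrow> nat"
  assumes sums: "(\<lambda>t. measure_pmf.prob M {x. t < X x}) sums s"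
  shows "measure_pmf.expectation M (\<lambda>x. real (X x)) = s"
proof -
  have "ennreal (real (X x)) = (\<Sum>t. indicator {x. t < X x} x)" for x
    by (subst suminf_finite[of "{..<X x}"]) (auto simp: indicator_def ennreal_of_nat_eq_real_of_nat)
  then have "(\<integral>\<^sup>+x. ennreal (real (X x)) \<partial>M) = (\<Sum>t. \<integral>\<^sup>+x. indicator {x. t < X x} x \<partial>M)"
    by (simp add: nn_integral_suminf)
  also have "\<dots> = (\<Sum>t. ennreal (measure_pmf.prob M {x. t < X x}))"
    by (intro suminf_cong) (simp add: measure_pmf.emeasure_eq_measure)
  also have "\<dots> = ennreal s"
    by (simp only: suminf_ennreal2[OF measure_nonneg sums_summable[OF sums]] sums_unique[OF sums])
  finally have "has_bochner_integral M (\<lambda>x. real (X x)) s"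
    using sums_le[OF _ sums_zero sums] by (intro has_bochner_integral_nn_integral) auto
  then show ?thesis by (rule has_bochner_integral_integral_eq)
qed

lemma letter_pmf_expectation_sums:
  assumes "0 < q" "q < 1" and bounded: "\<And>y. \<bar>f y\<bar> \<le> B"
  shows "(\<lambda>i. (1 - q) * q ^ i * f (Suc i)) sums measure_pmf.expectation (letter_pmf q) f"
proof -
  let ?p = "pmf (geometric_pmf (1 - q))"
  have p: "?p i = (1 - q) * q ^ i" for i using assms by simp
  have "integrable (geometric_pmf (1 - q)) (\<lambda>i. f (Suc i))"
    using bounded by (intro measure_pmf.integrable_const_bound[where B=B]) auto
  then have "integrable (count_space UNIV) (\<lambda>i. ?p i * f (Suc i))"
    by (simp add: measure_pmf_eq_density integrable_density)
  then have "(\<lambda>i. ?p i * f (Suc i)) sums (\<integral>i. ?p i * f (Suc i) \<partial>count_space UNIV)"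
    by (rule sums_integral_count_space_nat)
  also have "(\<integral>i. ?p i * f (Suc i) \<partial>count_space UNIV)
      = measure_pmf.expectation (geometric_pmf (1 - q)) (\<lambda>i. f (Suc i))"
    by (simp add: measure_pmf_eq_density integral_density)
  also have "\<dots> = measure_pmf.expectation (letter_pmf q) f"
    by (simp add: letter_pmf_def)
  finally show ?thesis by (simp only: p)
qed

lemma letter_pmf_expectation_power_above:
  assumes q: "0 < q" "q < 1" and z: "\<bar>z\<bar> \<le> 1"
  shows "measure_pmf.expectation (letter_pmf q) (\<lambda>y. if y \<le> t then 0 else z ^ y)
       = (1 - q) * z * (q * z) ^ t / (1 - q * z)"
proof -
  define g where "g i = (1 - q) * q ^ i * (if Suc i \<le> t then 0 else z ^ Suc i)" for i
  have "\<bar>if y \<le> t then 0 else z ^ y\<bar> \<le> 1" for y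
    using z by (simp add: power_abs power_le_one)
  then have "g sums measure_pmf.expectation (letter_pmf q) (\<lambda>y. if y \<le> t then 0 else z ^ y)"
    unfolding g_def by (rule letter_pmf_expectation_sums[OF q])
  moreover have "(\<lambda>i. g (i + t)) sums ((1 - q) * z * (q * z) ^ t / (1 - q * z))"
  proof -
    have "\<bar>q * z\<bar> \<le> q" using q z by (simp add: abs_mult mult_left_le)
    then have "\<bar>q * z\<bar> < 1" using q by linarith
    from sums_mult[OF geometric_sums[of "q * z"], of "(1 - q) * z * (q * z) ^ t"] this
    show ?thesis
      by (simp add: g_def power_add power_mult_distrib divide_inverse mult_ac)
  qed
  then have "g sums ((1 - q) * z * (q * z) ^ t / (1 - q * z) + (\<Sum>i<t. g i))"
    by (simp only: sums_iff_shift)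
  moreover have "(\<Sum>i<t. g i) = 0" by (simp add: g_def)
  ultimately show ?thesis by (metis add.right_neutral sums_unique2)
qed

lemma sum_binomial_tail_coeff_0: "(\<Sum>k\<le>d. real (d choose k) * x ^ k * tail_coeff q 0 k) = 1"
  by (simp add: if_distrib[where f="(*) _"] cong: if_cong)

lemma sum_binomial_tail_coeff_Suc:
  "(\<Sum>k\<le>Suc d. real (Suc d choose k) * x ^ k * tail_coeff q (Suc r) k)
     = (1 - x) * (\<Sum>k\<le>d. real (d choose k) * x ^ k * tail_coeff q (Suc r) k)
       + (\<Sum>k\<le>d. real (d choose k) * tail_coeff q r k
                    * ((1 - q) * q ^ k * x ^ Suc k / (1 - q ^ Suc k)))"
  using sum_choose_Suc_split[of d "\<lambda>k. x ^ k * tail_coeff q (Suc r) k"]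
  by (simp add: mult_ac sum_distrib_left sum.distrib ring_distribs sum_subtractf add_divide_distrib
      diff_divide_distrib)

lemma letter_pmf_expectation_threshold:
  assumes "0 < q" "q < 1" "finite K"
  shows "measure_pmf.expectation (letter_pmf q)
           (\<lambda>y. if y \<le> t then c else (\<Sum>k\<in>K. b k * (q ^ y) ^ k))
       = c * (1 - q ^ t) + (\<Sum>k\<in>K. b k * ((1 - q) * q ^ k * (q ^ t) ^ Suc k / (1 - q ^ Suc k)))"
proof -
  define above where "above z y = (if y \<le> t then 0 else z ^ y)" for z :: real and y :: nat
  have int: "integrable (letter_pmf q) (above z)" if "\<bar>z\<bar> \<le> 1" for z
    using that by (intro measure_pmf.integrable_const_bound[where B=1])
      (auto simp: above_def power_abs power_le_one)
  have E: "measure_pmf.expectation (letter_pmf q) (above z) = (1 - q) * z * (q * z) ^ t / (1 - q * z)"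
    if "\<bar>z\<bar> \<le> 1" for z
    unfolding above_def using letter_pmf_expectation_power_above[OF assms(1,2) that] .
  have qk: "\<bar>q ^ k\<bar> \<le> 1" for k using assms by (simp add: power_le_one)
  have "(\<lambda>y. if y \<le> t then c else (\<Sum>k\<in>K. b k * (q ^ y) ^ k))
      = (\<lambda>y. c - c * above 1 y + (\<Sum>k\<in>K. b k * above (q ^ k) y))"
    by (auto simp: above_def fun_eq_iff power_mult[symmetric] mult.commute)
  then have "measure_pmf.expectation (letter_pmf q)
               (\<lambda>y. if y \<le> t then c else (\<Sum>k\<in>K. b k * (q ^ y) ^ k))
      = c - c * measure_pmf.expectation (letter_pmf q) (above 1)
        + (\<Sum>k\<in>K. b k * measure_pmf.expectation (letter_pmf q) (above (q ^ k)))"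
    using int[of 1] int[OF qk] by (simp add: integral_sum)
  also have "\<dots> = c * (1 - q ^ t)
        + (\<Sum>k\<in>K. b k * ((1 - q) * q ^ k * (q ^ t) ^ Suc k / (1 - q ^ Suc k)))"
    using assms by (simp add: E[OF qk] E[of 1] right_diff_distrib power_mult_distrib
        flip: power_mult power_Suc) (simp add: mult.commute)
  finally show ?thesis .
qed

definition subword_pmf :: "real \<Rightarrow> nat \<Rightarrow> nat \<Rightarrow> (nat \<Rightarrow> nat) pmf" where
  "subword_pmf q m n = Pi_pmf {m..<n} 0 (\<lambda>_. letter_pmf q)"

definition tail_prob :: "real \<Rightarrow> nat \<Rightarrow> nat \<Rightarrow> nat \<Rightarrow> nat \<Rightarrow> real" where
  "tail_prob q r m n t = measure_pmf.prob (subword_pmf q m n) {a. r \<le> count_ltr_max_above m n a t}"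

lemma tail_prob_0 [simp]: "tail_prob q 0 m n t = 1"
  by (simp add: tail_prob_def)

lemma tail_prob_empty [simp]: "tail_prob q (Suc r) m m t = 0"
  by (simp add: tail_prob_def)

lemma tail_prob_Suc:
  assumes "m < n"
  shows "tail_prob q (Suc r) m n t = measure_pmf.expectation (letter_pmf q)
           (\<lambda>y. if y \<le> t then tail_prob q (Suc r) (Suc m) n t else tail_prob q r (Suc m) n y)"
proof -
  have "{m..<n} = insert m {Suc m..<n}" using assms by auto
  then have "tail_prob q (Suc r) m n t = measure_pmf.expectation (letter_pmf q)
      (\<lambda>y. measure_pmf.prob (subword_pmf q (Suc m) n)
             {a. Suc r \<le> count_ltr_max_above m n (a(m := y)) t})"
    by (simp add: tail_prob_def subword_pmf_def measure_Pi_pmf_insert)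
  also have "\<dots> = measure_pmf.expectation (letter_pmf q)
      (\<lambda>y. if y \<le> t then tail_prob q (Suc r) (Suc m) n t else tail_prob q r (Suc m) n y)"
    by (intro Bochner_Integration.integral_cong) (auto simp: tail_prob_def count_ltr_max_above_upd[OF assms])
  finally show ?thesis .
qed

lemma tail_prob_eq_sum_tail_coeff:
  assumes "0 < q" "q < 1"
  shows "tail_prob q r m (m + d) t = (\<Sum>k\<le>d. real (d choose k) * (q ^ t) ^ k * tail_coeff q r k)"
proof (induction d arbitrary: m r t)
  case 0
  then show ?case by (cases r) simp_all
next
  case (Suc d)
  show ?case
  proof (cases r)
    case 0
    then show ?thesis by (simp only: tail_prob_0 sum_binomial_tail_coeff_0)
  next
    case (Suc r')
    have IH: "tail_prob q r'' (Suc m) (m + Suc d) t'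
        = (\<Sum>k\<le>d. real (d choose k) * (q ^ t') ^ k * tail_coeff q r'' k)" for r'' t'
      using Suc.IH[where m="Suc m"] by simp
    let ?c = "\<Sum>k\<le>d. real (d choose k) * (q ^ t) ^ k * tail_coeff q (Suc r') k"
    have "tail_prob q r m (m + Suc d) t = measure_pmf.expectation (letter_pmf q)
        (\<lambda>y. if y \<le> t then tail_prob q (Suc r') (Suc m) (m + Suc d) t
             else tail_prob q r' (Suc m) (m + Suc d) y)"
      unfolding Suc by (rule tail_prob_Suc) simp
    also have "\<dots> = measure_pmf.expectation (letter_pmf q)
        (\<lambda>y. if y \<le> t then ?c else (\<Sum>k\<le>d. (real (d choose k) * tail_coeff q r' k) * (q ^ y) ^ k))"
      unfolding IH by (intro Bochner_Integration.integral_cong) (simp_all add: mult_ac)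
    also have "\<dots> = ?c * (1 - q ^ t) + (\<Sum>k\<le>d. real (d choose k) * tail_coeff q r' k
                    * ((1 - q) * q ^ k * (q ^ t) ^ Suc k / (1 - q ^ Suc k)))"
      by (rule letter_pmf_expectation_threshold[OF assms]) simp
    also have "\<dots> = (\<Sum>k\<le>Suc d. real (Suc d choose k) * (q ^ t) ^ k * tail_coeff q r k)"
      unfolding Suc sum_binomial_tail_coeff_Suc by (simp add: mult_ac)
    finally show ?thesis .
  qed
qed

lemma tail_prob_sums:
  assumes "0 < q" "q < 1" "1 \<le> r"
  shows "(\<lambda>t. tail_prob q r 0 n t) sums (\<Sum>k\<le>n. real (n choose k) * tail_coeff q r k / (1 - q ^ k))"
  unfolding tail_prob_eq_sum_tail_coeff[OF assms(1,2), of r 0 n, simplified]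
proof (rule sums_sum)
  fix k
  define C where "C = real (n choose k) * tail_coeff q r k"
  show "(\<lambda>t. real (n choose k) * (q ^ t) ^ k * tail_coeff q r k) sums (C / (1 - q ^ k))"
  proof (cases "k = 0")
    case True
    \<comment> \<open>here \<open>1 - q ^ k = 0\<close>, but also \<open>C = 0\<close>\<close>
    then show ?thesis using tail_coeff_eq_0[of 0 r q] assms(3) by (simp add: C_def)
  next
    case False
    then have "\<bar>q ^ k\<bar> < 1" using assms by (simp add: power_less_one_iff)
    then have "(\<lambda>t. C * (q ^ k) ^ t) sums (C * (1 / (1 - q ^ k)))"
      by (intro sums_mult geometric_sums) simp
    moreover have "(q ^ t) ^ k = (q ^ k) ^ t" for t
      by (simp only: power_mult[symmetric] mult.commute)
    ultimately show ?thesis by (simp add: C_def mult_ac)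
  qed
qed

lemma E_rn_eq_sum_tail_coeff:
  assumes "0 < q" "q < 1" "1 \<le> r"
  shows "E_rn q r n = (\<Sum>k\<le>n. real (n choose k) * tail_coeff q r k / (1 - q ^ k))"
proof -
  define V where
    "V a = (if r \<le> card (ltr_max_pos n a) then rth_ltr_max_value r n a else 0)" for a
  have "(\<lambda>a. real (V a))
      = (\<lambda>a. if r \<le> card (ltr_max_pos n a) then real (rth_ltr_max_value r n a) else 0)"
    by (simp add: V_def fun_eq_iff)
  then have "E_rn q r n = measure_pmf.expectation (subword_pmf q 0 n) (\<lambda>a. real (V a))"
    by (simp add: E_rn_def word_pmf_def subword_pmf_def atLeast0LessThan)
  moreover have "{a. t < V a} = {a. r \<le> count_ltr_max_above 0 n a t}" for t
    using ltr_max_above_ge_iff[OF assms(3)] by (auto simp: V_def)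
  ultimately show ?thesis
    using tail_prob_sums[OF assms, of n]
    by (simp add: expectation_nat_sums_tail_probs tail_prob_def)
qed

lemma E_rn_closed_form:
  assumes "0 < q" "q < 1" "1 \<le> r" "r \<le> n"
  shows "E_rn q r n = (-1) ^ r * ((1 - q) / q) ^ (r - 1) *
           (\<Sum>k=r..n. real (n choose k) * (-1) ^ k * phi q r k / (1 - q ^ k)\<^sup>2)"
proof -
  have "E_rn q r n = (\<Sum>k\<le>n. real (n choose k) * tail_coeff q r k / (1 - q ^ k))"
    by (rule E_rn_eq_sum_tail_coeff[OF assms(1-3)])
  also have "\<dots> = (\<Sum>k=r..n. real (n choose k) * tail_coeff q r k / (1 - q ^ k))"
    by (rule sum.mono_neutral_right) (auto simp: tail_coeff_eq_0)
  also have "\<dots> = (\<Sum>k=r..n. (-1) ^ r * ((1 - q) / q) ^ (r - 1) *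
                     (real (n choose k) * (-1) ^ k * phi q r k / (1 - q ^ k)\<^sup>2))"
    using assms by (intro sum.cong)
      (auto simp: tail_coeff_eq_closed tail_coeff_closed_def power_add power2_eq_square)
  finally show ?thesis by (simp add: sum_distrib_left)
qed

lemma E_rn_1_closed_form:
  assumes "0 < q" "q < 1" "1 \<le> n"
  shows "E_rn q 1 n = (\<Sum>k=1..n. real (n choose k) * (-1) ^ (k - 1) * (1 / (1 - q ^ k)))"
proof -
  have "E_rn q 1 n = (\<Sum>k=1..n. - (real (n choose k) * (-1) ^ k * (1 - q ^ k) / (1 - q ^ k)\<^sup>2))"
    using E_rn_closed_form[OF assms(1,2), of 1 n] assms(3) by (simp add: phi_1 sum_negf)
  also have "\<dots> = (\<Sum>k=1..n. real (n choose k) * (-1) ^ (k - 1) * (1 / (1 - q ^ k)))"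
  proof (intro sum.cong refl)
    fix k assume "k \<in> {1..n}"
    then have "q ^ k < 1" using assms by (simp add: power_less_one_iff)
    moreover obtain j where "k = Suc j" using \<open>k \<in> {1..n}\<close> by (cases k) auto
    ultimately show "- (real (n choose k) * (-1) ^ k * (1 - q ^ k) / (1 - q ^ k)\<^sup>2)
        = real (n choose k) * (-1) ^ (k - 1) * (1 / (1 - q ^ k))"
      by (simp add: power2_eq_square)
  qed
  finally show ?thesis .
qed

theorem mainTheorem2:
  fixes q :: real
  assumes "0 < q" and "q < 1"
  shows "(\<forall>r n. 1 \<le> r \<longrightarrow> r \<le> n \<longrightarrow>
           E_rn q r n = (-1) ^ r * ((1 - q) / q) ^ (r - 1) *
             (\<Sum>k=r..n. real (n choose k) * (-1) ^ k * phi q r k / (1 - q ^ k)\<^sup>2))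
       \<and> (\<forall>n. 1 \<le> n \<longrightarrow>
           E_rn q 1 n = (\<Sum>k=1..n. real (n choose k) * (-1) ^ (k - 1) * (1 / (1 - q ^ k))))"
  using E_rn_closed_form[OF assms] E_rn_1_closed_form[OF assms] by blast

end
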